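(* Let $N$ be a lattice, $\sigma\subset N_{\mathbb R}$ a strongly convex rational polyhedral cone, and $\Delta$ a rational simplicial subdivision of $\sigma$ with ray generators $v_1,\ldots,v_s$. If $\lambda\in\Delta$ is a face of every maximal cone of $\Delta$, then $H_\Delta=H_{\operatorname{lk}\lambda}$, and $H_{\operatorname{lk}\gamma}=H_{\operatorname{lk}(\gamma+\lambda)}$ for every $\gamma\in\Delta$.
   Context: $v_1,\ldots,v_s$ are the primitive generators of the rays of $\Delta$, and $x^v$ ($v\in N$) denote monomials in the Laurent polynomial ring $\mathbb Z[N]$. "$v_i\in\tau$" means $v_i$ generates a ray of $\tau$. $H_\Delta=\sum_{\tau\in\Delta}\bigl(\prod_{v_i\in\tau}x^{v_i}\prod_{v_j\notin\tau}(1-x^{v_j})\bigr)$. The link $\operatorname{lk}\tau$ is the set of $\gamma\in\Delta$ with $\gamma\cap\tau=0$ and $\gamma+\tau\in\Delta$; $v_j\in\operatorname{lk}\tau$ means $v_j$ generates a ray of some cone of $\operatorname{lk}\tau$; $H_{\operatorname{lk}\tau}=\sum_{\gamma\in\operatorname{lk}\tau}\bigl(\prod_{v_i\in\gamma}x^{v_i}\prod_{v_j\in\operatorname{lk}\tau,\,v_j\notin\gamma}(1-x^{v_j})\bigr)$. *)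

theory Defs
  imports "HOL-Analysis.Analysis" "HOL-Library.Poly_Mapping"
begin

text \<open>The lattice N is modelled as int^'n (a lattice of rank CARD('n)), embedded in
  N_R = real^'n.  The Laurent polynomial ring Z[N] is the group ring (int^n =>0 int).\<close>

definition emb :: "int^'n \<Rightarrow> real^'n" where
  "emb v = (\<chi> i. of_int (v $ i))"

definition latpts :: "(real^'n) set" where
  "latpts = range emb"

definition monom :: "int^'n \<Rightarrow> (int^'n \<Rightarrow>\<^sub>0 int)" where
  "monom v = Poly_Mapping.single v 1"

definition cone_gen :: "(real^'n) set \<Rightarrow> (real^'n) set" where
  "cone_gen S = {\<Sum>v\<in>S. c v *\<^sub>R v | c. \<forall>v\<in>S. c v \<ge> 0}"

definition rational_polyhedral_cone :: "(real^'n) set \<Rightarrow> bool" where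
  "rational_polyhedral_cone \<sigma> \<longleftrightarrow> (\<exists>S. finite S \<and> S \<subseteq> latpts \<and> \<sigma> = cone_gen S)"

definition strongly_convex :: "(real^'n) set \<Rightarrow> bool" where
  "strongly_convex \<sigma> \<longleftrightarrow> (\<forall>x. x \<in> \<sigma> \<and> - x \<in> \<sigma> \<longrightarrow> x = 0)"

definition rational_simplicial_cone :: "(real^'n) set \<Rightarrow> bool" where
  "rational_simplicial_cone \<tau> \<longleftrightarrow>
     (\<exists>S. finite S \<and> S \<subseteq> latpts \<and> independent S \<and> \<tau> = cone_gen S)"

definition simplicial_fan :: "(real^'n) set set \<Rightarrow> bool" where
  "simplicial_fan \<Delta> \<longleftrightarrow> finite \<Delta> \<and>
     (\<forall>\<tau>\<in>\<Delta>. rational_simplicial_cone \<tau>) \<and>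
     (\<forall>\<tau>\<in>\<Delta>. \<forall>F. F face_of \<tau> \<and> F \<noteq> {} \<longrightarrow> F \<in> \<Delta>) \<and>
     (\<forall>\<tau>\<in>\<Delta>. \<forall>\<tau>'\<in>\<Delta>. (\<tau> \<inter> \<tau>') face_of \<tau> \<and> (\<tau> \<inter> \<tau>') face_of \<tau>')"

definition rational_simplicial_subdivision :: "(real^'n) set set \<Rightarrow> (real^'n) set \<Rightarrow> bool" where
  "rational_simplicial_subdivision \<Delta> \<sigma> \<longleftrightarrow> simplicial_fan \<Delta> \<and> \<Union>\<Delta> = \<sigma>"

definition maximal_cone :: "(real^'n) set set \<Rightarrow> (real^'n) set \<Rightarrow> bool" where
  "maximal_cone \<Delta> \<tau> \<longleftrightarrow> \<tau> \<in> \<Delta> \<and> \<not> (\<exists>\<tau>'\<in>\<Delta>. \<tau> \<subset> \<tau>')"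

definition rays_of :: "(real^'n) set set \<Rightarrow> (real^'n) set \<Rightarrow> (real^'n) set set" where
  "rays_of \<Delta> \<tau> = {\<rho> \<in> \<Delta>. aff_dim \<rho> = 1 \<and> \<rho> face_of \<tau>}"

definition prim :: "(real^'n) set \<Rightarrow> int^'n" where
  "prim \<rho> = (THE v. v \<noteq> 0 \<and> emb v \<in> \<rho> \<and>
      (\<forall>w. emb w \<in> \<rho> \<longrightarrow> (\<exists>k::int. k \<ge> 0 \<and> w = (\<chi> i. k * v $ i))))"

definition msum :: "(real^'n) set \<Rightarrow> (real^'n) set \<Rightarrow> (real^'n) set" where
  "msum A B = {x + y | x y. x \<in> A \<and> y \<in> B}"

definition lk :: "(real^'n) set set \<Rightarrow> (real^'n) set \<Rightarrow> (real^'n) set set" where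
  "lk \<Delta> \<tau> = {\<gamma> \<in> \<Delta>. \<gamma> \<inter> \<tau> = {0} \<and> msum \<gamma> \<tau> \<in> \<Delta>}"

text \<open>H for a collection C of cones of \<Delta>; the variables are the rays of cones of C.\<close>
definition Hpoly :: "(real^'n) set set \<Rightarrow> (real^'n) set set \<Rightarrow> (int^'n \<Rightarrow>\<^sub>0 int)" where
  "Hpoly \<Delta> C = (\<Sum>\<tau>\<in>C. (\<Prod>\<rho>\<in>rays_of \<Delta> \<tau>. monom (prim \<rho>)) *
       (\<Prod>\<rho>\<in>(\<Union>\<gamma>\<in>C. rays_of \<Delta> \<gamma>) - rays_of \<Delta> \<tau>. 1 - monom (prim \<rho>)))"

end

theory Submission
  imports Defs
begin

text \<open>
  Every cone of \<Delta> lies in a maximal cone, and every maximal cone is a simplicial cone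
  cone(S) containing lam. Inside such a cone the cones of \<Delta> are the cone(T) with T \<subseteq> S,
  and cone(A) is in the link of cone(B) iff A and B are disjoint. It follows that the ray sets
  of the cones in lk \<gamma> are exactly the disjoint unions A \<union> B, where A is the ray set of a
  cone in lk (\<gamma> + lam) and B is any set of rays of lam not in \<gamma>. Summing the weights
  x^B (1 - x)^(L - B) over all subsets B of a finite set L
  gives \<Prod>(x + (1 - x)) = 1, so the extra rays drop out and H(lk \<gamma>) = H(lk (\<gamma> + lam)).
  The case \<gamma> = 0 is the first identity, since lk 0 = \<Delta>.
\<close>

section \<open>Finitely generated cones\<close>

lemma zero_in_cone_gen: "0 \<in> cone_gen S"
  unfolding cone_gen_def by (auto intro!: exI[of _ "\<lambda>_. 0"])

lemma cone_gen_empty [simp]: "cone_gen {} = {0}"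
  unfolding cone_gen_def by auto

lemma convex_cone_cone_gen:
  assumes "finite S"
  shows "convex_cone (cone_gen S)"
  unfolding convex_cone_iff
proof (intro conjI ballI allI impI)
  show "0 \<in> cone_gen S" by (rule zero_in_cone_gen)
next
  fix x y assume "x \<in> cone_gen S" "y \<in> cone_gen S"
  then obtain c d where "x = (\<Sum>v\<in>S. c v *\<^sub>R v)" "\<forall>v\<in>S. c v \<ge> 0"
    and "y = (\<Sum>v\<in>S. d v *\<^sub>R v)" "\<forall>v\<in>S. d v \<ge> 0"
    unfolding cone_gen_def by auto
  then show "x + y \<in> cone_gen S"
    unfolding cone_gen_def
    by (auto simp: scaleR_add_left sum.distrib intro!: exI[of _ "\<lambda>v. c v + d v"])
next
  fix x and t :: real assume "x \<in> cone_gen S" "t \<ge> 0"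
  then obtain c where "x = (\<Sum>v\<in>S. c v *\<^sub>R v)" "\<forall>v\<in>S. c v \<ge> 0"
    unfolding cone_gen_def by auto
  with \<open>t \<ge> 0\<close> show "t *\<^sub>R x \<in> cone_gen S"
    unfolding cone_gen_def by (auto simp: scaleR_sum_right intro!: exI[of _ "\<lambda>v. t * c v"])
qed

lemma cone_gen_eq_convex_cone_hull:
  assumes "finite S"
  shows "cone_gen S = convex_cone hull S"
proof
  show "cone_gen S \<subseteq> convex_cone hull S"
  proof
    fix x assume "x \<in> cone_gen S"
    then obtain c where x: "x = (\<Sum>v\<in>S. c v *\<^sub>R v)" and c: "\<forall>v\<in>S. c v \<ge> 0"
      unfolding cone_gen_def by auto
    have "(\<Sum>v\<in>T. c v *\<^sub>R v) \<in> convex_cone hull S" if "T \<subseteq> S" for T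
      using finite_subset[OF that assms] that
      by (induction T rule: finite_induct)
         (auto simp: c convex_cone_hull_contains_0 convex_cone_hull_add convex_cone_hull_mul hull_inc)
    then show "x \<in> convex_cone hull S" using x by blast
  qed
next
  have "S \<subseteq> cone_gen S"
  proof
    fix v assume "v \<in> S"
    then have "v = (\<Sum>w\<in>S. (if w = v then 1 else 0) *\<^sub>R w)"
      using assms by (simp add: if_distrib[of "\<lambda>c. c *\<^sub>R _"] cong: if_cong)
    then show "v \<in> cone_gen S" unfolding cone_gen_def by (auto intro!: exI[of _ "\<lambda>w. if w = v then 1 else 0"])
  qed
  then show "convex_cone hull S \<subseteq> cone_gen S"
    by (rule hull_minimal) (rule convex_cone_cone_gen[OF assms])
qed

lemma cone_gen_superset: "finite S \<Longrightarrow> S \<subseteq> cone_gen S"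
  by (simp add: cone_gen_eq_convex_cone_hull hull_subset)

lemma cone_gen_mono: "finite B \<Longrightarrow> A \<subseteq> B \<Longrightarrow> cone_gen A \<subseteq> cone_gen B"
  by (simp add: cone_gen_eq_convex_cone_hull finite_subset hull_mono)

lemma msum_cone_gen:
  assumes "finite A" "finite B"
  shows "msum (cone_gen A) (cone_gen B) = cone_gen (A \<union> B)"
  using assms by (auto simp: msum_def cone_gen_eq_convex_cone_hull convex_cone_hull_Un)

lemma aff_dim_cone_gen:
  assumes "independent T" "finite T"
  shows "aff_dim (cone_gen T) = int (card T)"
proof -
  have "cone_gen T \<subseteq> span T"
    using assms(2) by (simp add: cone_gen_eq_convex_cone_hull hull_minimal convex_cone_span span_superset)
  then have "span (cone_gen T) = span T"
    using cone_gen_superset[OF assms(2)] by (metis span_eq span_superset subset_trans)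
  then have "dim (cone_gen T) = card T"
    by (metis dim_span dim_eq_card_independent[OF assms(1)])
  then show ?thesis
    by (simp add: aff_dim_zero hull_inc zero_in_cone_gen)
qed

section \<open>Cones spanned by linearly independent vectors\<close>

lemma representation_sum_scaleR:
  assumes "independent S" "T \<subseteq> S" "finite T"
  shows "representation S (\<Sum>v\<in>T. c v *\<^sub>R v) = (\<lambda>w. if w \<in> T then c w else 0)"
proof -
  have coord: "representation S (c v *\<^sub>R v) = (\<lambda>w. if w = v then c v else 0)" if "v \<in> T" for v
  proof -
    have v: "v \<in> S" using that assms(2) by blast
    show ?thesis
      by (simp add: real_vector.representation_scale[OF assms(1) span_base[OF v]]
          real_vector.representation_basis[OF assms(1) v] if_distrib cong: if_cong)
  qed
  have "representation S (\<Sum>v\<in>T. c v *\<^sub>R v) = (\<lambda>w. \<Sum>v\<in>T. if w = v then c v else 0)"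
    using assms(1,2) coord
    by (subst real_vector.representation_sum) (auto intro!: span_scale intro: span_base)
  then show ?thesis using assms(3) by simp
qed

lemma mem_cone_gen_iff_representation:
  assumes "independent S" "finite S" "T \<subseteq> S"
  shows "x \<in> cone_gen T \<longleftrightarrow> x \<in> span S \<and> (\<forall>w\<in>S. 0 \<le> representation S x w) \<and>
    (\<forall>w\<in>S - T. representation S x w = 0)"
proof
  assume "x \<in> cone_gen T"
  then obtain c where x: "x = (\<Sum>v\<in>T. c v *\<^sub>R v)" and c: "\<forall>v\<in>T. c v \<ge> 0"
    unfolding cone_gen_def by auto
  have "x \<in> span S"
    unfolding x using assms(3) by (intro span_sum span_scale) (auto intro: span_base)
  moreover have "finite T" using assms(2,3) by (rule finite_subset[rotated])
  ultimately show "x \<in> span S \<and> (\<forall>w\<in>S. 0 \<le> representation S x w) \<and>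
      (\<forall>w\<in>S - T. representation S x w = 0)"
    using c representation_sum_scaleR[OF assms(1,3)] unfolding x by auto
next
  assume x: "x \<in> span S \<and> (\<forall>w\<in>S. 0 \<le> representation S x w) \<and>
    (\<forall>w\<in>S - T. representation S x w = 0)"
  have "x = (\<Sum>w\<in>S. representation S x w *\<^sub>R w)"
    using real_vector.sum_representation_eq[OF assms(1) _ assms(2)] x by simp
  also have "\<dots> = (\<Sum>w\<in>T. representation S x w *\<^sub>R w)"
    using assms(2,3) x by (intro sum.mono_neutral_right) auto
  finally show "x \<in> cone_gen T"
    using x assms(3) unfolding cone_gen_def by auto
qed

lemma cone_gen_Int:
  assumes "independent S" "finite S" "A \<subseteq> S" "B \<subseteq> S"
  shows "cone_gen A \<inter> cone_gen B = cone_gen (A \<inter> B)"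
proof -
  have "A \<inter> B \<subseteq> S" using assms(3) by blast
  note mem = mem_cone_gen_iff_representation[OF assms(1,2)]
  show ?thesis
    by (auto simp: mem[OF assms(3)] mem[OF assms(4)] mem[OF \<open>A \<inter> B \<subseteq> S\<close>])
qed

lemma generator_in_cone_gen_iff:
  assumes "independent S" "finite S" "T \<subseteq> S" "v \<in> S"
  shows "v \<in> cone_gen T \<longleftrightarrow> v \<in> T"
  using assms
  by (auto simp: mem_cone_gen_iff_representation[of S] real_vector.representation_basis span_base)

lemma cone_gen_eq_iff:
  assumes "independent S" "finite S" "A \<subseteq> S" "B \<subseteq> S"
  shows "cone_gen A = cone_gen B \<longleftrightarrow> A = B"
  using generator_in_cone_gen_iff[OF assms(1,2)] assms(3,4) by blast

lemma cone_gen_face_of: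
  assumes "independent S" "finite S" "T \<subseteq> S"
  shows "cone_gen T face_of cone_gen S"
  unfolding face_of_def
proof (intro conjI ballI impI)
  show "cone_gen T \<subseteq> cone_gen S" using assms(2,3) by (rule cone_gen_mono)
  show "convex (cone_gen T)"
    using convex_cone_cone_gen[OF finite_subset[OF assms(3,2)]] by (simp add: convex_cone_def)
next
  fix a b x assume ab: "a \<in> cone_gen S" "b \<in> cone_gen S" and x: "x \<in> cone_gen T"
    and "x \<in> open_segment a b"
  then obtain u where u: "0 < u" "u < 1" and xab: "x = (1 - u) *\<^sub>R a + u *\<^sub>R b"
    by (auto simp: in_segment)
  note mem = mem_cone_gen_iff_representation[OF assms(1,2)]
  have a: "a \<in> span S" "\<forall>w\<in>S. 0 \<le> representation S a w"
    and b: "b \<in> span S" "\<forall>w\<in>S. 0 \<le> representation S b w"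
    using ab unfolding mem[OF order_refl] by blast+
  have rep: "representation S x = (\<lambda>w. (1 - u) * representation S a w + u * representation S b w)"
    unfolding xab using assms(1) a(1) b(1)
    by (simp add: real_vector.representation_add real_vector.representation_scale span_scale)
  have "representation S a w = 0 \<and> representation S b w = 0" if w: "w \<in> S - T" for w
  proof -
    \<comment> \<open>a coordinate outside T vanishes at x, a positive combination of the nonnegative
      coordinates of a and b\<close>
    have "representation S x w = 0" using x w unfolding mem[OF assms(3)] by blast
    then have "(1 - u) * representation S a w + u * representation S b w = 0" by (simp add: rep)
    moreover have "0 \<le> representation S a w" "0 \<le> representation S b w" using a(2) b(2) w by auto
    ultimately show ?thesis using u by (auto simp: add_nonneg_eq_0_iff)
  qed
  then show "a \<in> cone_gen T" "b \<in> cone_gen T"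
    unfolding mem[OF assms(3)] using a b by auto
qed

lemma convex_cone_face_of:
  assumes "convex_cone K" "F face_of K" "0 \<in> F"
  shows "convex_cone F"
  unfolding convex_cone_def conic_def
proof (intro conjI allI impI)
  show "F \<noteq> {}" "convex F" using assms(2,3) face_of_imp_convex by auto
next
  fix x and t :: real assume x: "x \<in> F" and "0 \<le> t"
  show "t *\<^sub>R x \<in> F"
  proof (cases "x = 0 \<or> t \<le> 1")
    case True
    then show ?thesis
      using convexD_alt[OF face_of_imp_convex[OF assms(2)] assms(3) x, of t] \<open>0 \<le> t\<close> assms(3)
      by auto
  next
    case False
    then have "x \<in> open_segment 0 (t *\<^sub>R x)"
      by (auto simp: in_segment intro!: exI[of _ "1/t"])
    moreover have "t *\<^sub>R x \<in> K"
      using assms(1,2) x \<open>0 \<le> t\<close> convex_cone_scaleR face_of_imp_subset by blast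
    ultimately show ?thesis
      using face_ofD[OF assms(2)] x convex_cone_contains_0[OF assms(1)] by blast
  qed
qed

lemma face_of_convex_cone_summand:
  assumes "convex_cone K" "F face_of K" "0 \<in> F" "x \<in> F" "y \<in> K" "x - y \<in> K"
  shows "y \<in> F"
proof -
  define a b where "a = 2 *\<^sub>R y" and "b = 2 *\<^sub>R (x - y)"
  have ab: "a \<in> K" "b \<in> K" unfolding a_def b_def using assms(1,5,6) by (auto intro!: convex_cone_scaleR)
  have xab: "x = (1 - 1/2) *\<^sub>R a + (1/2) *\<^sub>R b" by (simp add: a_def b_def algebra_simps)
  have "a \<in> F"
  proof (cases "a = b")
    case True
    then show ?thesis using xab assms(4) scaleR_collapse by metis
  next
    case False
    then have "x \<in> open_segment a b" using xab by (auto simp: in_segment intro!: exI[of _ "1/2"])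
    then show ?thesis using face_ofD[OF assms(2) _ ab assms(4)] by blast
  qed
  then have "(1/2) *\<^sub>R a \<in> F"
    using convex_cone_scaleR[OF convex_cone_face_of[OF assms(1-3)]] by simp
  then show "y \<in> F" by (simp add: a_def)
qed

lemma cone_gen_diff_coordinate:
  assumes "independent S" "finite S" "x \<in> cone_gen S" "v \<in> S"
  shows "x - representation S x v *\<^sub>R v \<in> cone_gen S"
proof -
  note mem = mem_cone_gen_iff_representation[OF assms(1,2) order_refl]
  have x: "x \<in> span S" "\<forall>w\<in>S. 0 \<le> representation S x w" using assms(3) mem by auto
  have "representation S (x - representation S x v *\<^sub>R v) =
      (\<lambda>w. representation S x w - (if w = v then representation S x v else 0))"
    using assms(1,4) x(1)
    by (simp add: real_vector.representation_diff real_vector.representation_scale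
        real_vector.representation_basis span_scale span_base if_distrib cong: if_cong)
  moreover have "x - representation S x v *\<^sub>R v \<in> span S"
    using x(1) assms(4) by (simp add: span_diff span_scale span_base)
  ultimately show ?thesis using x(2) mem by auto
qed

lemma face_of_cone_gen_eq:
  assumes "independent S" "finite S" "F face_of cone_gen S" "0 \<in> F"
  shows "F = cone_gen {v \<in> S. v \<in> F}"
proof
  have K: "convex_cone (cone_gen S)" using assms(2) by (rule convex_cone_cone_gen)
  have F: "convex_cone F" using K assms(3,4) by (rule convex_cone_face_of)
  moreover have "finite {v \<in> S. v \<in> F}" using assms(2) by simp
  ultimately show "cone_gen {v \<in> S. v \<in> F} \<subseteq> F"
    by (simp add: cone_gen_eq_convex_cone_hull) (rule hull_minimal, auto)
  note mem = mem_cone_gen_iff_representation[OF assms(1,2)]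
  show "F \<subseteq> cone_gen {v \<in> S. v \<in> F}"
  proof
    fix x assume x: "x \<in> F"
    then have xK: "x \<in> cone_gen S" using face_of_imp_subset[OF assms(3)] by blast
    then have xS: "x \<in> span S" "\<And>w. w \<in> S \<Longrightarrow> 0 \<le> representation S x w"
      using mem[OF order_refl] by auto
    have "v \<in> F" if v: "v \<in> S" "representation S x v \<noteq> 0" for v
    proof -
      have "representation S x v *\<^sub>R v \<in> cone_gen S"
        using v(1) xS(2)[OF v(1)] cone_gen_superset[OF assms(2)]
        by (blast intro: convex_cone_scaleR[OF K])
      then have "representation S x v *\<^sub>R v \<in> F"
        using face_of_convex_cone_summand[OF K assms(3,4) x]
          cone_gen_diff_coordinate[OF assms(1,2) xK v(1)] by blast
      from convex_cone_scaleR[OF F _ this, of "1 / representation S x v"] xS(2)[OF v(1)]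
      have "(1 / representation S x v) *\<^sub>R representation S x v *\<^sub>R v \<in> F"
        by fastforce
      then show "v \<in> F" using v(2) by simp
    qed
    then show "x \<in> cone_gen {v \<in> S. v \<in> F}"
      using xS mem[of "{v \<in> S. v \<in> F}"] by auto
  qed
qed

section \<open>Subset weights\<close>

definition subset_weight :: "('r \<Rightarrow> 'a::comm_ring_1) \<Rightarrow> 'r set \<Rightarrow> 'r set \<Rightarrow> 'a" where
  "subset_weight m U E = (\<Prod>\<rho>\<in>E. m \<rho>) * (\<Prod>\<rho>\<in>U - E. 1 - m \<rho>)"

lemma sum_subset_weight_Pow: "finite L \<Longrightarrow> (\<Sum>B\<in>Pow L. subset_weight m L B) = 1"
  using prod_add[of L m "\<lambda>\<rho>. 1 - m \<rho>"] by (simp add: subset_weight_def)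

lemma subset_weight_Un:
  assumes "finite U" "finite L" "U \<inter> L = {}" "A \<subseteq> U" "B \<subseteq> L"
  shows "subset_weight m (U \<union> L) (A \<union> B) = subset_weight m U A * subset_weight m L B"
proof -
  have "(U \<union> L) - (A \<union> B) = (U - A) \<union> (L - B)" using assms(3-5) by blast
  moreover have "(\<Prod>\<rho>\<in>A \<union> B. m \<rho>) = (\<Prod>\<rho>\<in>A. m \<rho>) * (\<Prod>\<rho>\<in>B. m \<rho>)"
    using assms by (intro prod.union_disjoint) (auto intro: finite_subset)
  moreover have "(\<Prod>\<rho>\<in>(U - A) \<union> (L - B). 1 - m \<rho>) = (\<Prod>\<rho>\<in>U - A. 1 - m \<rho>) * (\<Prod>\<rho>\<in>L - B. 1 - m \<rho>)"
    using assms by (intro prod.union_disjoint) auto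
  ultimately show ?thesis by (simp add: subset_weight_def ac_simps)
qed

lemma sum_subset_weight_extend:
  assumes "finite X" "finite U" "finite L" "\<Union>X \<subseteq> U" "U \<inter> L = {}"
  shows "(\<Sum>E\<in>(\<lambda>(A, B). A \<union> B) ` (X \<times> Pow L). subset_weight m (U \<union> L) E) =
    (\<Sum>A\<in>X. subset_weight m U A)"
proof -
  have "inj_on (\<lambda>(A, B). A \<union> B) (X \<times> Pow L)"
  proof (rule inj_onI, clarify)
    fix A B A' B' assume "A \<in> X" "B \<subseteq> L" "A' \<in> X" "B' \<subseteq> L" "A \<union> B = A' \<union> B'"
    moreover have "A \<inter> L = {}" "A' \<inter> L = {}" using assms(4,5) \<open>A \<in> X\<close> \<open>A' \<in> X\<close> by blast+
    ultimately show "A = A' \<and> B = B'" by blast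
  qed
  then have "(\<Sum>E\<in>(\<lambda>(A, B). A \<union> B) ` (X \<times> Pow L). subset_weight m (U \<union> L) E) =
      (\<Sum>A\<in>X. \<Sum>B\<in>Pow L. subset_weight m (U \<union> L) (A \<union> B))"
    by (simp add: sum.reindex sum.cartesian_product case_prod_unfold)
  also have "\<dots> = (\<Sum>A\<in>X. subset_weight m U A * (\<Sum>B\<in>Pow L. subset_weight m L B))"
  proof (rule sum.cong[OF refl])
    fix A assume "A \<in> X"
    then have "A \<subseteq> U" using assms(4) by blast
    then show "(\<Sum>B\<in>Pow L. subset_weight m (U \<union> L) (A \<union> B)) =
        subset_weight m U A * (\<Sum>B\<in>Pow L. subset_weight m L B)"
      using assms(2,3,5) by (auto simp: sum_distrib_left subset_weight_Un intro!: sum.cong)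
  qed
  finally show ?thesis using assms(3) by (simp add: sum_subset_weight_Pow)
qed

lemma Hpoly_eq_sum_subset_weight:
  assumes "inj_on (rays_of \<Delta>) C"
  shows "Hpoly \<Delta> C =
    (\<Sum>A\<in>rays_of \<Delta> ` C. subset_weight (\<lambda>\<rho>. monom (prim \<rho>)) (\<Union>(rays_of \<Delta> ` C)) A)"
  unfolding Hpoly_def subset_weight_def by (simp add: sum.reindex[OF assms])

section \<open>Simplicial fans and links\<close>

lemma msum_upper1: "0 \<in> B \<Longrightarrow> A \<subseteq> msum A B"
  unfolding msum_def by force

lemma msum_upper2: "0 \<in> A \<Longrightarrow> B \<subseteq> msum A B"
  unfolding msum_def by force

lemma simplicial_fan_finite: "simplicial_fan \<Delta> \<Longrightarrow> finite \<Delta>"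
  by (simp add: simplicial_fan_def)

lemma simplicial_fan_cone:
  assumes "simplicial_fan \<Delta>" "\<tau> \<in> \<Delta>"
  obtains S where "finite S" "independent S" "\<tau> = cone_gen S"
proof -
  have "rational_simplicial_cone \<tau>" using assms by (simp add: simplicial_fan_def)
  then show ?thesis using that unfolding rational_simplicial_cone_def by blast
qed

lemma simplicial_fan_zero: "simplicial_fan \<Delta> \<Longrightarrow> \<tau> \<in> \<Delta> \<Longrightarrow> 0 \<in> \<tau>"
  by (metis simplicial_fan_cone zero_in_cone_gen)

lemma simplicial_fan_face_in:
  "simplicial_fan \<Delta> \<Longrightarrow> \<mu> \<in> \<Delta> \<Longrightarrow> F face_of \<mu> \<Longrightarrow> 0 \<in> F \<Longrightarrow> F \<in> \<Delta>"
  unfolding simplicial_fan_def by (elim conjE) blast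

lemma simplicial_fan_subset_face_of:
  assumes "simplicial_fan \<Delta>" "\<tau> \<in> \<Delta>" "\<mu> \<in> \<Delta>" "\<tau> \<subseteq> \<mu>"
  shows "\<tau> face_of \<mu>"
proof -
  have "(\<tau> \<inter> \<mu>) face_of \<mu>" using assms(1-3) unfolding simplicial_fan_def by (elim conjE) blast
  then show ?thesis using assms(4) by (simp add: Int_absorb2)
qed

lemma simplicial_fan_maximal_cone_above:
  assumes "simplicial_fan \<Delta>" "\<tau> \<in> \<Delta>"
  obtains \<mu> where "maximal_cone \<Delta> \<mu>" "\<tau> \<subseteq> \<mu>"
proof -
  have "finite \<Delta>" using assms(1) by (rule simplicial_fan_finite)
  then obtain \<mu> where "\<mu> \<in> \<Delta>" "\<tau> \<subseteq> \<mu>" "\<forall>\<mu>'\<in>\<Delta>. \<mu> \<subseteq> \<mu>' \<longrightarrow> \<mu> = \<mu>'"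
    using finite_has_maximal2[OF _ assms(2)] by blast
  then show ?thesis using that unfolding maximal_cone_def by blast
qed

text \<open>A chart is a cone cone_gen S of the fan; the cones of the fan inside it are the
  cone_gen T with T \<subseteq> S, so its combinatorics is that of the subsets of S.\<close>

locale fan_chart =
  fixes \<Delta> :: "(real^'n) set set" and S :: "(real^'n) set"
  assumes fan: "simplicial_fan \<Delta>"
    and chart_in_fan: "cone_gen S \<in> \<Delta>"
    and finite_chart: "finite S"
    and independent_chart: "independent S"
begin

lemma cone_gen_in_fan: "T \<subseteq> S \<Longrightarrow> cone_gen T \<in> \<Delta>"
  using simplicial_fan_face_in[OF fan chart_in_fan] cone_gen_face_of[OF independent_chart finite_chart]
  by (simp add: zero_in_cone_gen)

lemma obtain_subcone:
  assumes "\<psi> \<in> \<Delta>" "\<psi> \<subseteq> cone_gen S"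
  obtains T where "T \<subseteq> S" "\<psi> = cone_gen T"
proof -
  have "\<psi> face_of cone_gen S"
    using simplicial_fan_subset_face_of[OF fan assms(1) chart_in_fan assms(2)] .
  then have "\<psi> = cone_gen {v \<in> S. v \<in> \<psi>}"
    by (rule face_of_cone_gen_eq[OF independent_chart finite_chart _ simplicial_fan_zero[OF fan assms(1)]])
  then show ?thesis by (rule that[rotated]) blast
qed

lemma rays_of_cone_gen:
  assumes "T \<subseteq> S"
  shows "rays_of \<Delta> (cone_gen T) = (\<lambda>v. cone_gen {v}) ` T"
proof
  have indep: "independent T'" "finite T'" if "T' \<subseteq> S" for T'
    using that independent_mono[OF independent_chart] finite_subset[OF _ finite_chart] by auto
  show "rays_of \<Delta> (cone_gen T) \<subseteq> (\<lambda>v. cone_gen {v}) ` T"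
  proof
    fix \<rho> assume "\<rho> \<in> rays_of \<Delta> (cone_gen T)"
    then have \<rho>: "\<rho> \<in> \<Delta>" "aff_dim \<rho> = 1" "\<rho> \<subseteq> cone_gen T"
      by (auto simp: rays_of_def dest: face_of_imp_subset)
    moreover have "cone_gen T \<subseteq> cone_gen S" using cone_gen_mono[OF finite_chart assms] .
    ultimately obtain T' where T': "T' \<subseteq> S" "\<rho> = cone_gen T'"
      using obtain_subcone[of \<rho>] by blast
    then have "card T' = 1"
      using \<rho>(2) aff_dim_cone_gen[OF indep(1)[OF T'(1)] indep(2)[OF T'(1)]] by simp
    then obtain v where v: "T' = {v}" by (auto simp: card_1_singleton_iff)
    have "v \<in> cone_gen T"
      using \<rho>(3) T'(2) v cone_gen_superset[of "{v}"] by auto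
    then have "v \<in> T"
      using generator_in_cone_gen_iff[OF independent_chart finite_chart assms] T'(1) v by blast
    then show "\<rho> \<in> (\<lambda>v. cone_gen {v}) ` T" using T'(2) v by blast
  qed
  show "(\<lambda>v. cone_gen {v}) ` T \<subseteq> rays_of \<Delta> (cone_gen T)"
  proof clarify
    fix v assume "v \<in> T"
    then have v: "{v} \<subseteq> S" "{v} \<subseteq> T" using assms by auto
    have "aff_dim (cone_gen {v}) = 1" using aff_dim_cone_gen[OF indep[OF v(1)]] by simp
    moreover have "cone_gen {v} face_of cone_gen T"
      using cone_gen_face_of[OF indep[OF assms] v(2)] .
    moreover have "cone_gen {v} \<in> \<Delta>" using cone_gen_in_fan[OF v(1)] .
    ultimately show "cone_gen {v} \<in> rays_of \<Delta> (cone_gen T)" by (simp add: rays_of_def)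
  qed
qed

lemma msum_cone_gen_chart:
  "A \<subseteq> S \<Longrightarrow> B \<subseteq> S \<Longrightarrow> msum (cone_gen A) (cone_gen B) = cone_gen (A \<union> B)"
  using finite_subset[OF _ finite_chart] by (simp add: msum_cone_gen)

lemma inj_on_ray: "inj_on (\<lambda>v. cone_gen {v}) S"
proof (rule inj_onI)
  fix v w assume "v \<in> S" "w \<in> S" "cone_gen {v} = cone_gen {w}"
  then have "{v} = {w}"
    using cone_gen_eq_iff[OF independent_chart finite_chart, of "{v}" "{w}"] by simp
  then show "v = w" by simp
qed

lemma cone_gen_in_lk_iff:
  assumes "A \<subseteq> S" "B \<subseteq> S"
  shows "cone_gen A \<in> lk \<Delta> (cone_gen B) \<longleftrightarrow> A \<inter> B = {}"
proof -
  have "A \<inter> B \<subseteq> S" using assms(1) by blast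
  then have "cone_gen A \<inter> cone_gen B = {0} \<longleftrightarrow> A \<inter> B = {}"
    using cone_gen_Int[OF independent_chart finite_chart assms]
      cone_gen_eq_iff[OF independent_chart finite_chart, of "A \<inter> B" "{}"] by simp
  moreover have "msum (cone_gen A) (cone_gen B) \<in> \<Delta>"
    using assms by (simp add: msum_cone_gen_chart cone_gen_in_fan)
  ultimately show ?thesis
    using cone_gen_in_fan[OF assms(1)] unfolding lk_def by blast
qed

end

lemma inj_on_rays_of_fan:
  assumes "simplicial_fan \<Delta>"
  shows "inj_on (rays_of \<Delta>) \<Delta>"
proof -
  have "\<tau> \<subseteq> \<mu>" if \<tau>: "\<tau> \<in> \<Delta>" and \<mu>: "\<mu> \<in> \<Delta>"
    and rays: "rays_of \<Delta> \<tau> = rays_of \<Delta> \<mu>" for \<tau> \<mu>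
  proof -
    obtain S where S: "finite S" "independent S" "\<tau> = cone_gen S"
      using simplicial_fan_cone[OF assms \<tau>] by blast
    interpret fan_chart \<Delta> S using assms \<tau> S by unfold_locales simp_all
    have "v \<in> \<mu>" if "v \<in> S" for v
    proof -
      have "cone_gen {v} \<in> rays_of \<Delta> \<mu>"
        using rays rays_of_cone_gen[OF order_refl] that unfolding S(3) by blast
      then have "cone_gen {v} \<subseteq> \<mu>" unfolding rays_of_def using face_of_imp_subset by blast
      then show "v \<in> \<mu>" using cone_gen_superset[of "{v}"] by blast
    qed
    moreover obtain S' where "finite S'" "\<mu> = cone_gen S'"
      using simplicial_fan_cone[OF assms \<mu>] by blast
    then have "convex_cone \<mu>" by (simp add: convex_cone_cone_gen)
    ultimately show "\<tau> \<subseteq> \<mu>"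
      unfolding S(3) cone_gen_eq_convex_cone_hull[OF S(1)] by (intro hull_minimal subsetI)
  qed
  then show ?thesis by (intro inj_onI) blast
qed

lemma rays_of_lk_disjoint:
  assumes "\<alpha> \<in> lk \<Delta> \<tau>" "\<beta> \<subseteq> \<tau>"
  shows "rays_of \<Delta> \<alpha> \<inter> rays_of \<Delta> \<beta> = {}"
proof -
  have "aff_dim \<rho> \<le> 0" if "\<rho> face_of \<alpha>" "\<rho> face_of \<beta>" for \<rho>
  proof -
    have "\<rho> \<subseteq> \<alpha> \<inter> \<tau>" using that assms(2) face_of_imp_subset by blast
    then have "\<rho> \<subseteq> {0}" using assms(1) unfolding lk_def by blast
    then show ?thesis using aff_dim_subset[of \<rho> "{0}"] by simp
  qed
  then show ?thesis unfolding rays_of_def by fastforce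
qed

lemma zero_cone_in_lk: "{0} \<in> \<Delta> \<Longrightarrow> \<tau> \<in> \<Delta> \<Longrightarrow> 0 \<in> \<tau> \<Longrightarrow> {0} \<in> lk \<Delta> \<tau>"
  unfolding lk_def msum_def by auto

lemma lk_zero_cone: "simplicial_fan \<Delta> \<Longrightarrow> lk \<Delta> {0} = \<Delta>"
  unfolding lk_def msum_def by (auto dest: simplicial_fan_zero)

locale fan_with_common_face =
  fixes \<Delta> :: "(real^'n) set set" and lam :: "(real^'n) set"
  assumes fan: "simplicial_fan \<Delta>"
    and lam_in_fan: "lam \<in> \<Delta>"
    and lam_face_of_maximal: "\<forall>\<tau>. maximal_cone \<Delta> \<tau> \<longrightarrow> lam face_of \<tau>"
begin

lemma obtain_chart:
  assumes "\<psi> \<in> \<Delta>"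
  obtains S where "fan_chart \<Delta> S" "\<psi> \<subseteq> cone_gen S" "lam \<subseteq> cone_gen S"
proof -
  obtain \<mu> where \<mu>: "maximal_cone \<Delta> \<mu>" "\<psi> \<subseteq> \<mu>"
    using simplicial_fan_maximal_cone_above[OF fan assms] by blast
  then have "\<mu> \<in> \<Delta>" "lam \<subseteq> \<mu>"
    using lam_face_of_maximal face_of_imp_subset unfolding maximal_cone_def by blast+
  moreover obtain S where S: "finite S" "independent S" "\<mu> = cone_gen S"
    using simplicial_fan_cone[OF fan \<open>\<mu> \<in> \<Delta>\<close>] by blast
  ultimately have "fan_chart \<Delta> S" using fan by unfold_locales simp_all
  then show ?thesis using that \<mu>(2) \<open>lam \<subseteq> \<mu>\<close> S(3) by blast
qed

lemma zero_cone_in_fan: "{0} \<in> \<Delta>"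
proof -
  obtain S where "fan_chart \<Delta> S" using obtain_chart[OF lam_in_fan] by blast
  then show ?thesis using fan_chart.cone_gen_in_fan[of \<Delta> S "{}"] by simp
qed

lemma msum_lam_in_fan:
  assumes "\<gamma> \<in> \<Delta>"
  shows "msum \<gamma> lam \<in> \<Delta>"
proof -
  obtain S where "fan_chart \<Delta> S" and S: "\<gamma> \<subseteq> cone_gen S" "lam \<subseteq> cone_gen S"
    using obtain_chart[OF assms] by blast
  interpret fan_chart \<Delta> S by fact
  obtain Tg where "Tg \<subseteq> S" "\<gamma> = cone_gen Tg" by (rule obtain_subcone[OF assms S(1)])
  moreover obtain Tl where "Tl \<subseteq> S" "lam = cone_gen Tl" by (rule obtain_subcone[OF lam_in_fan S(2)])
  ultimately show ?thesis by (simp add: msum_cone_gen_chart cone_gen_in_fan)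
qed

lemma rays_of_lk_split:
  assumes "\<gamma> \<in> \<Delta>" "\<alpha> \<in> lk \<Delta> \<gamma>"
  obtains \<alpha>' B where "\<alpha>' \<in> lk \<Delta> (msum \<gamma> lam)" "B \<subseteq> rays_of \<Delta> lam - rays_of \<Delta> \<gamma>"
    "rays_of \<Delta> \<alpha> = rays_of \<Delta> \<alpha>' \<union> B"
proof -
  have \<alpha>: "\<alpha> \<in> \<Delta>" "msum \<alpha> \<gamma> \<in> \<Delta>" using assms(2) unfolding lk_def by auto
  obtain S where "fan_chart \<Delta> S" and S: "msum \<alpha> \<gamma> \<subseteq> cone_gen S" "lam \<subseteq> cone_gen S"
    using obtain_chart[OF \<alpha>(2)] by blast
  interpret fan_chart \<Delta> S by fact
  have "\<alpha> \<subseteq> cone_gen S" "\<gamma> \<subseteq> cone_gen S"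
    using S(1) msum_upper1[of \<gamma> \<alpha>] msum_upper2[of \<alpha> \<gamma>] simplicial_fan_zero[OF fan] \<alpha>(1) assms(1)
    by blast+
  then obtain Ta Tg where T: "Ta \<subseteq> S" "Tg \<subseteq> S" and eq: "\<alpha> = cone_gen Ta" "\<gamma> = cone_gen Tg"
    using obtain_subcone \<alpha>(1) assms(1) by metis
  obtain Tl where Tl: "Tl \<subseteq> S" "lam = cone_gen Tl" by (rule obtain_subcone[OF lam_in_fan S(2)])
  have "Ta \<inter> Tg = {}" using assms(2) cone_gen_in_lk_iff[OF T] unfolding eq by simp
  \<comment> \<open>\<alpha>' is spanned by the generators of \<alpha> outside lam, B consists of the rays of \<alpha> in lam\<close>
  show ?thesis
  proof
    have "Ta - Tl \<subseteq> S" using T(1) by blast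
    then show "cone_gen (Ta - Tl) \<in> lk \<Delta> (msum \<gamma> lam)"
      using T Tl \<open>Ta \<inter> Tg = {}\<close> cone_gen_in_lk_iff[of "Ta - Tl" "Tg \<union> Tl"]
      unfolding eq(2) Tl(2) by (simp add: msum_cone_gen_chart Int_Un_distrib Diff_Int_distrib2)
    have "(\<lambda>v. cone_gen {v}) ` (Ta \<inter> Tl) \<subseteq> (\<lambda>v. cone_gen {v}) ` (Tl - Tg)"
      using \<open>Ta \<inter> Tg = {}\<close> by blast
    also have "\<dots> = rays_of \<Delta> lam - rays_of \<Delta> \<gamma>"
      using T Tl eq inj_on_image_set_diff[OF inj_on_ray, of Tl Tg]
      by (simp add: rays_of_cone_gen Diff_subset_conv le_supI2)
    finally show "(\<lambda>v. cone_gen {v}) ` (Ta \<inter> Tl) \<subseteq> rays_of \<Delta> lam - rays_of \<Delta> \<gamma>" .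
    have "rays_of \<Delta> \<alpha> = (\<lambda>v. cone_gen {v}) ` ((Ta - Tl) \<union> (Ta \<inter> Tl))"
      using T eq by (simp add: rays_of_cone_gen Un_Diff_Int)
    then show "rays_of \<Delta> \<alpha> = rays_of \<Delta> (cone_gen (Ta - Tl)) \<union> (\<lambda>v. cone_gen {v}) ` (Ta \<inter> Tl)"
      by (simp add: rays_of_cone_gen[OF \<open>Ta - Tl \<subseteq> S\<close>] image_Un)
  qed
qed

lemma rays_of_lk_join:
  assumes "\<gamma> \<in> \<Delta>" "\<alpha>' \<in> lk \<Delta> (msum \<gamma> lam)" "B \<subseteq> rays_of \<Delta> lam - rays_of \<Delta> \<gamma>"
  shows "rays_of \<Delta> \<alpha>' \<union> B \<in> rays_of \<Delta> ` lk \<Delta> \<gamma>"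
proof -
  have \<alpha>': "\<alpha>' \<in> \<Delta>" "msum \<alpha>' (msum \<gamma> lam) \<in> \<Delta>" using assms(2) unfolding lk_def by auto
  obtain S where "fan_chart \<Delta> S" and S: "msum \<alpha>' (msum \<gamma> lam) \<subseteq> cone_gen S" "lam \<subseteq> cone_gen S"
    using obtain_chart[OF \<alpha>'(2)] by blast
  interpret fan_chart \<Delta> S by fact
  have "0 \<in> \<alpha>'" "0 \<in> lam" "0 \<in> msum \<gamma> lam"
    using simplicial_fan_zero[OF fan] \<alpha>'(1) lam_in_fan msum_lam_in_fan[OF assms(1)] by blast+
  then have "\<alpha>' \<subseteq> cone_gen S" "\<gamma> \<subseteq> cone_gen S"
    using S(1) msum_upper1[of "msum \<gamma> lam" \<alpha>'] msum_upper2[of \<alpha>' "msum \<gamma> lam"]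
      msum_upper1[of lam \<gamma>] by blast+
  then obtain Ta Tg where T: "Ta \<subseteq> S" "Tg \<subseteq> S" and eq: "\<alpha>' = cone_gen Ta" "\<gamma> = cone_gen Tg"
    using obtain_subcone \<alpha>'(1) assms(1) by metis
  obtain Tl where Tl: "Tl \<subseteq> S" "lam = cone_gen Tl" by (rule obtain_subcone[OF lam_in_fan S(2)])
  have "Ta \<inter> (Tg \<union> Tl) = {}"
    using assms(2) T Tl cone_gen_in_lk_iff[of Ta "Tg \<union> Tl"]
    unfolding eq Tl(2) by (simp add: msum_cone_gen_chart)
  have "B \<subseteq> (\<lambda>v. cone_gen {v}) ` (Tl - Tg)"
    using assms(3) T Tl eq inj_on_image_set_diff[OF inj_on_ray, of Tl Tg]
    by (simp add: rays_of_cone_gen Diff_subset_conv le_supI2)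
  then obtain TB where TB: "TB \<subseteq> Tl - Tg" "B = (\<lambda>v. cone_gen {v}) ` TB"
    by (auto simp: subset_image_iff)
  have "Ta \<union> TB \<subseteq> S" "(Ta \<union> TB) \<inter> Tg = {}"
    using T Tl TB \<open>Ta \<inter> (Tg \<union> Tl) = {}\<close> by auto
  then have "cone_gen (Ta \<union> TB) \<in> lk \<Delta> \<gamma>"
    unfolding eq(2) using cone_gen_in_lk_iff T(2) by blast
  moreover have "rays_of \<Delta> (cone_gen (Ta \<union> TB)) = rays_of \<Delta> \<alpha>' \<union> B"
    using \<open>Ta \<union> TB \<subseteq> S\<close> T TB eq by (simp add: rays_of_cone_gen image_Un)
  ultimately show ?thesis by (metis image_eqI)
qed

lemma rays_of_lk_eq:
  assumes "\<gamma> \<in> \<Delta>"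
  shows "rays_of \<Delta> ` lk \<Delta> \<gamma> = (\<lambda>(A, B). A \<union> B) `
    (rays_of \<Delta> ` lk \<Delta> (msum \<gamma> lam) \<times> Pow (rays_of \<Delta> lam - rays_of \<Delta> \<gamma>))"
proof
  show "rays_of \<Delta> ` lk \<Delta> \<gamma> \<subseteq> (\<lambda>(A, B). A \<union> B) `
      (rays_of \<Delta> ` lk \<Delta> (msum \<gamma> lam) \<times> Pow (rays_of \<Delta> lam - rays_of \<Delta> \<gamma>))"
  proof clarify
    fix \<alpha> assume "\<alpha> \<in> lk \<Delta> \<gamma>"
    then obtain \<alpha>' B where "\<alpha>' \<in> lk \<Delta> (msum \<gamma> lam)" "B \<subseteq> rays_of \<Delta> lam - rays_of \<Delta> \<gamma>"
      "rays_of \<Delta> \<alpha> = rays_of \<Delta> \<alpha>' \<union> B"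
      by (rule rays_of_lk_split[OF assms])
    then show "rays_of \<Delta> \<alpha> \<in> (\<lambda>(A, B). A \<union> B) `
        (rays_of \<Delta> ` lk \<Delta> (msum \<gamma> lam) \<times> Pow (rays_of \<Delta> lam - rays_of \<Delta> \<gamma>))"
      by (intro image_eqI[of _ _ "(rays_of \<Delta> \<alpha>', B)"]) auto
  qed
  show "(\<lambda>(A, B). A \<union> B) ` (rays_of \<Delta> ` lk \<Delta> (msum \<gamma> lam) \<times> Pow (rays_of \<Delta> lam - rays_of \<Delta> \<gamma>))
      \<subseteq> rays_of \<Delta> ` lk \<Delta> \<gamma>"
    using rays_of_lk_join[OF assms] by auto
qed

lemma Hpoly_lk_msum:
  assumes "\<gamma> \<in> \<Delta>"
  shows "Hpoly \<Delta> (lk \<Delta> \<gamma>) = Hpoly \<Delta> (lk \<Delta> (msum \<gamma> lam))"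
proof -
  define X where "X = rays_of \<Delta> ` lk \<Delta> (msum \<gamma> lam)"
  define L where "L = rays_of \<Delta> lam - rays_of \<Delta> \<gamma>"
  define m where "m = (\<lambda>\<rho> :: (real^'n) set. monom (prim \<rho>))"
  have "finite \<Delta>" using fan by (rule simplicial_fan_finite)
  then have fin: "finite X" "finite (\<Union>X)" "finite L"
    unfolding X_def L_def lk_def rays_of_def by auto
  have "{0} \<in> lk \<Delta> (msum \<gamma> lam)"
    using zero_cone_in_lk[OF zero_cone_in_fan msum_lam_in_fan[OF assms]]
      simplicial_fan_zero[OF fan msum_lam_in_fan[OF assms]] by blast
  then have "X \<noteq> {}" unfolding X_def by blast
  then have vars: "\<Union>((\<lambda>(A, B). A \<union> B) ` (X \<times> Pow L)) = \<Union>X \<union> L" by blast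
  have "\<Union>X \<inter> L = {}"
    using rays_of_lk_disjoint msum_upper2[OF simplicial_fan_zero[OF fan assms]]
    unfolding X_def L_def by blast
  have inj: "inj_on (rays_of \<Delta>) (lk \<Delta> \<tau>)" for \<tau>
    by (rule inj_on_subset[OF inj_on_rays_of_fan[OF fan]]) (auto simp: lk_def)
  have "Hpoly \<Delta> (lk \<Delta> \<gamma>) =
      (\<Sum>E\<in>(\<lambda>(A, B). A \<union> B) ` (X \<times> Pow L). subset_weight m (\<Union>X \<union> L) E)"
    using Hpoly_eq_sum_subset_weight[OF inj] rays_of_lk_eq[OF assms] vars
    unfolding X_def L_def m_def by simp
  also have "\<dots> = (\<Sum>A\<in>X. subset_weight m (\<Union>X) A)"
    using fin \<open>\<Union>X \<inter> L = {}\<close> by (intro sum_subset_weight_extend) auto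
  also have "\<dots> = Hpoly \<Delta> (lk \<Delta> (msum \<gamma> lam))"
    using Hpoly_eq_sum_subset_weight[OF inj] unfolding X_def m_def by simp
  finally show ?thesis .
qed

end

theorem lemma2p1:
  fixes \<sigma> :: "(real^'n) set" and \<Delta> :: "(real^'n) set set" and lam :: "(real^'n) set"
  assumes "rational_polyhedral_cone \<sigma>" and "strongly_convex \<sigma>"
    and "rational_simplicial_subdivision \<Delta> \<sigma>"
    and "lam \<in> \<Delta>"
    and "\<forall>\<tau>. maximal_cone \<Delta> \<tau> \<longrightarrow> lam face_of \<tau>"
  shows "Hpoly \<Delta> \<Delta> = Hpoly \<Delta> (lk \<Delta> lam) \<and>
         (\<forall>\<gamma>\<in>\<Delta>. Hpoly \<Delta> (lk \<Delta> \<gamma>) = Hpoly \<Delta> (lk \<Delta> (msum \<gamma> lam)))"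
proof -
  \<comment> \<open>only the fan structure of \<Delta> matters\<close>
  interpret fan_with_common_face \<Delta> lam
    using assms(3-5) by unfold_locales (simp_all add: rational_simplicial_subdivision_def)
  have "\<forall>\<gamma>\<in>\<Delta>. Hpoly \<Delta> (lk \<Delta> \<gamma>) = Hpoly \<Delta> (lk \<Delta> (msum \<gamma> lam))"
    using Hpoly_lk_msum by blast
  moreover have "msum {0} lam = lam" by (auto simp: msum_def)
  ultimately show ?thesis using zero_cone_in_fan lk_zero_cone[OF fan] by metis
qed

end
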